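(* Assume the setting in the context, and assume there is $\bar\nu>0$ with $n\nu_{ni}\le\bar\nu$ for all $i$ and all $n$. Then \[ \sigma_n^2\le\frac{\bar\nu^2}{n^2}\sum_{i=1}^n|N_i|\,\|\tilde y_i\|_p^2\,\|\psi_i\|_q^2 \] for any $p,q\in[1,\infty]$ with $1/p+1/q=1/2$ (trivially if some $\|\tilde y_i\|_p$ or $\|\psi_i\|_q$ is infinite). Furthermore, with $S_2=\{(p,q)\in[1,\infty]^2:1/p+1/q=1/2\}$, \[ \sigma_n^2\le\frac{\bar\nu^2d_n}{n}\Bigl(\inf_{(p,q)\in S_2}\|\tilde y\|_{\max,p}^n\,\|\psi\|_{\max,q}^n\Bigr)^2 \] (trivially if the infimum is infinite).
   Context: Let $(\Omega,\mathcal F,P)$ be a probability space (latent environment) and $\mathcal Z$ a measurable space of treatment assignments with a known randomisation probability measure $\mu$. For units $i=1,\dots,n$, the potential outcome is a measurable map $\tilde y_i:\mathcal Z\times\Omega\to\mathbb R$ of the form $\tilde y_i(z,\omega)=y_i(z,x_i(\omega),\epsilon_i(\omega))$ with $y_i,x_i,\epsilon_i$ measurable. For $p\ge1$, $\|u\|_p=(\int|u(z,\omega)|^p\mu(\mathrm dz)P(\mathrm d\omega))^{1/p}$; $\mathbb E,\mathbb V$ are taken with respect to $\mu(\mathrm dz)P(\mathrm d\omega)$. Each $\tilde y_i$ lies in a model space $\mathcal M_i\subset L^2(\mathcal Z\times\Omega)$ (taken closed) with inner product $\langle u,v\rangle=\mathbb E[uv]$. The treatment effect $\theta_i$ is a continuous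 linear functional on $\mathcal M_i$ with Riesz representer $\psi_i\in\mathcal M_i$, i.e. $\theta_i(u)=\langle u,\psi_i\rangle$ for all $u\in\mathcal M_i$. The Riesz estimator is $\hat\theta_i=\tilde y_i\psi_i$; given weights $\nu_{ni}\ge0$, $\hat\tau_n(z,\omega)=\sum_{i=1}^n\nu_{ni}\hat\theta_i(z,\omega)$ and $\sigma_n^2=\mathbb V[\hat\tau_n(z,\omega)]$. Dependency neighbourhoods: for each $i$, $N_i$ is the intersection of all subsets $M\subset\{1,\dots,n\}$ such that $(\tilde y_i,\psi_i)$ is independent of $\{(\tilde y_j,\psi_j):j\notin M\}$; $d_n=n^{-1}\sum_{i=1}^n|N_i|$. Max-$p$ norms: $\|\tilde y\|_{\max,p}^n=\max_{1\le i\le n}\|\tilde y_i\|_p$ and $\|\psi\|_{\max,q}^n=\max_{1\le i\le n}\|\psi_i\|_q$. *)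

theory Defs
  imports "HOL-Probability.Probability"
begin

definition Lp_norm :: "'a measure \<Rightarrow> ennreal \<Rightarrow> ('a \<Rightarrow> real) \<Rightarrow> ennreal" where
  "Lp_norm M p u =
     (if p = \<infinity> then esssup M (\<lambda>x. ennreal \<bar>u x\<bar>)
      else (let I = (\<integral>\<^sup>+ x. ennreal (\<bar>u x\<bar> powr enn2real p) \<partial>M)
            in if I = \<infinity> then \<infinity> else ennreal (enn2real I powr (1 / enn2real p))))"

definition L2_funs :: "'a measure \<Rightarrow> ('a \<Rightarrow> real) set" where
  "L2_funs M = {u. u \<in> borel_measurable M \<and> integrable M (\<lambda>x. (u x)\<^sup>2)}"

definition closed_L2_subspace :: "'a measure \<Rightarrow> ('a \<Rightarrow> real) set \<Rightarrow> bool" where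
  "closed_L2_subspace M V \<longleftrightarrow>
     V \<subseteq> L2_funs M \<and> (\<lambda>x. 0) \<in> V \<and>
     (\<forall>u\<in>V. \<forall>v\<in>V. \<forall>c::real. (\<lambda>x. u x + c * v x) \<in> V) \<and>
     (\<forall>f u. (\<forall>k. f k \<in> V) \<and> u \<in> L2_funs M \<and>
            ((\<lambda>k. \<integral>\<^sup>+ x. ennreal ((f k x - u x)\<^sup>2) \<partial>M) \<longlonglongrightarrow> 0) \<longrightarrow> u \<in> V)"

text \<open>Dependency neighbourhood N_i: intersection of all S \<subseteq> {1..n} such that
  (y_i, psi_i) is independent of the family ((y_j, psi_j))_{j \<in> {1..n} - S}.\<close>
definition dep_nbhd :: "'a measure \<Rightarrow> (nat \<Rightarrow> 'a \<Rightarrow> real) \<Rightarrow> (nat \<Rightarrow> 'a \<Rightarrow> real)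
                        \<Rightarrow> nat \<Rightarrow> nat \<Rightarrow> nat set" where
  "dep_nbhd M y \<psi> n i =
     \<Inter> {S. S \<subseteq> {1..n} \<and>
            prob_space.indep_set M
              (sigma_sets (space M)
                 {(\<lambda>x. (y i x, \<psi> i x)) -` B \<inter> space M | B. B \<in> sets (borel :: (real \<times> real) measure)})
              (sigma_sets (space M)
                 (\<Union>j\<in>{1..n} - S.
                    {(\<lambda>x. (y j x, \<psi> j x)) -` B \<inter> space M | B. B \<in> sets (borel :: (real \<times> real) measure)}))}"

end

theory Submission
  imports Defs
begin

text \<open>Write \<open>\<theta>\<^sub>i = y\<^sub>i \<psi>\<^sub>i\<close>. The variance of \<open>\<Sum>\<^sub>i \<nu>\<^sub>n\<^sub>i \<theta>\<^sub>i\<close> is the double sum of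
  the covariances \<open>\<nu>\<^sub>n\<^sub>i \<nu>\<^sub>n\<^sub>j Cov(\<theta>\<^sub>i, \<theta>\<^sub>j)\<close>. A covariance vanishes unless \<open>i\<close> and \<open>j\<close>
  lie in each other's dependency neighbourhood, and otherwise it is at most
  \<open>(E \<theta>\<^sub>i\<^sup>2 + E \<theta>\<^sub>j\<^sup>2) / 2\<close>; after symmetrising, unit \<open>i\<close> is charged at most \<open>|N\<^sub>i|\<close>
  times, so \<open>\<sigma>\<^sub>n\<^sup>2 \<le> (\<nu>bar / n)\<^sup>2 \<Sum>\<^sub>i |N\<^sub>i| E \<theta>\<^sub>i\<^sup>2\<close>. Hoelder's inequality with the
  conjugate exponents \<open>p/2\<close> and \<open>q/2\<close> bounds \<open>E \<theta>\<^sub>i\<^sup>2\<close> by \<open>\<parallel>y\<^sub>i\<parallel>\<^sub>p\<^sup>2 \<parallel>\<psi>\<^sub>i\<parallel>\<^sub>q\<^sup>2\<close>;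
  bounding the norms by their maxima over \<open>i\<close> and taking the infimum over \<open>(p, q)\<close>
  gives the second inequality.\<close>

section \<open>Dependency neighbourhoods\<close>

lemma (in prob_space) dep_nbhd_subset:
  assumes [measurable]: "y i \<in> borel_measurable M" "\<psi> i \<in> borel_measurable M"
  shows "dep_nbhd M y \<psi> n i \<subseteq> {1..n}"
proof -
  define G where "G k = {(\<lambda>x. (y k x, \<psi> k x)) -` B \<inter> space M | B.
    B \<in> sets (borel :: (real \<times> real) measure)}" for k
  have "sigma_sets (space M) (G i) \<subseteq> events"
    by (rule sets.sigma_sets_subset) (auto simp: G_def intro: measurable_sets)
  \<comment> \<open>\<open>S = {1..n}\<close> is admissible: an empty family generates the trivial \<open>\<sigma>\<close>-algebra\<close>
  moreover have trivial: "sigma_sets (space M) (\<Union>k\<in>{1..n} - {1..n}. G k) = {{}, space M}"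
    by (simp add: sigma_sets_empty_eq)
  ultimately have "indep_set (sigma_sets (space M) (G i))
      (sigma_sets (space M) (\<Union>k\<in>{1..n} - {1..n}. G k))"
    unfolding indep_sets2_eq trivial
    by (auto simp: Int_absorb2 prob_space dest: sets.sets_into_space)
  then show ?thesis unfolding dep_nbhd_def G_def by blast
qed

lemma (in prob_space) indep_var_mult_if_notin_dep_nbhd:
  assumes j: "j \<in> {1..n}" "j \<notin> dep_nbhd M y \<psi> n i"
    and [measurable]: "y i \<in> borel_measurable M" "\<psi> i \<in> borel_measurable M"
      "y j \<in> borel_measurable M" "\<psi> j \<in> borel_measurable M"
  shows "indep_var borel (\<lambda>x. y i x * \<psi> i x) borel (\<lambda>x. y j x * \<psi> j x)"
proof -
  define G where "G k = {(\<lambda>x. (y k x, \<psi> k x)) -` B \<inter> space M | B.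
    B \<in> sets (borel :: (real \<times> real) measure)}" for k
  have mult: "(\<lambda>(a, b). a * b :: real) \<in> borel_measurable borel"
    unfolding case_prod_beta by (rule borel_measurable_continuous_onI) (intro continuous_intros)
  from j obtain S where S: "S \<subseteq> {1..n}" "j \<notin> S"
    "indep_set (sigma_sets (space M) (G i)) (sigma_sets (space M) (\<Union>k\<in>{1..n} - S. G k))"
    unfolding dep_nbhd_def G_def by blast
  have "sigma_sets (space M) (G j) \<subseteq> sigma_sets (space M) (\<Union>k\<in>{1..n} - S. G k)"
    using S(1,2) j(1) by (intro sigma_sets_mono') auto
  with S(3) have "indep_set (sigma_sets (space M) (G i)) (sigma_sets (space M) (G j))"
    unfolding indep_sets2_eq by blast
  then have "indep_var borel (\<lambda>x. (y i x, \<psi> i x)) borel (\<lambda>x. (y j x, \<psi> j x))"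
    unfolding indep_var_eq G_def by auto
  then have "indep_var borel ((\<lambda>(a, b). a * b) \<circ> (\<lambda>x. (y i x, \<psi> i x)))
      borel ((\<lambda>(a, b). a * b) \<circ> (\<lambda>x. (y j x, \<psi> j x)))"
    using mult mult by (rule indep_var_compose)
  then show ?thesis by (simp add: o_def)
qed

section \<open>Variance of a sum with local dependence\<close>

lemma abs_mult_le_sum_squares: "\<bar>a * b\<bar> \<le> ((a::real)\<^sup>2 + b\<^sup>2) / 2"
  using sum_squares_bound[of "\<bar>a\<bar>" "\<bar>b\<bar>"] by (simp add: abs_mult)

lemma integrable_mult_of_square_integrable:
  fixes X Y :: "'a \<Rightarrow> real"
  assumes "X \<in> borel_measurable M" "Y \<in> borel_measurable M"
    and "integrable M (\<lambda>x. (X x)\<^sup>2)" "integrable M (\<lambda>x. (Y x)\<^sup>2)"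
  shows "integrable M (\<lambda>x. X x * Y x)"
proof (rule Bochner_Integration.integrable_bound)
  show "integrable M (\<lambda>x. ((X x)\<^sup>2 + (Y x)\<^sup>2) / 2)" using assms by auto
  show "AE x in M. norm (X x * Y x) \<le> norm (((X x)\<^sup>2 + (Y x)\<^sup>2) / 2)"
    using abs_mult_le_sum_squares by auto
qed (use assms in auto)

definition (in prob_space) covariance :: "('a \<Rightarrow> real) \<Rightarrow> ('a \<Rightarrow> real) \<Rightarrow> real" where
  "covariance X Y = expectation (\<lambda>x. (X x - expectation X) * (Y x - expectation Y))"

lemma (in prob_space) covariance_commute: "covariance X Y = covariance Y X"
  by (simp add: covariance_def mult.commute)

lemma (in prob_space) square_integrable_centred:
  fixes X :: "'a \<Rightarrow> real"
  assumes "X \<in> borel_measurable M" "integrable M (\<lambda>x. (X x)\<^sup>2)"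
  shows "integrable M (\<lambda>x. (X x - c)\<^sup>2)"
proof -
  have "integrable M X" using assms by (rule square_integrable_imp_integrable)
  then show ?thesis using assms(2) by (simp add: power2_diff)
qed

lemma (in prob_space) abs_covariance_le:
  fixes X Y :: "'a \<Rightarrow> real"
  assumes "X \<in> borel_measurable M" "Y \<in> borel_measurable M"
    and "integrable M (\<lambda>x. (X x)\<^sup>2)" "integrable M (\<lambda>x. (Y x)\<^sup>2)"
  shows "\<bar>covariance X Y\<bar> \<le> (variance X + variance Y) / 2"
proof -
  let ?DX = "\<lambda>x. X x - expectation X" and ?DY = "\<lambda>x. Y x - expectation Y"
  have "\<bar>covariance X Y\<bar> \<le> expectation (\<lambda>x. \<bar>?DX x * ?DY x\<bar>)"
    unfolding covariance_def by (rule integral_abs_bound)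
  also have "\<dots> \<le> expectation (\<lambda>x. ((?DX x)\<^sup>2 + (?DY x)\<^sup>2) / 2)"
    using assms square_integrable_centred
    by (intro integral_mono integrable_mult_of_square_integrable abs_mult_le_sum_squares
        integrable_abs integrable_divide integrable_add) auto
  also have "\<dots> = (variance X + variance Y) / 2"
    using assms square_integrable_centred by simp
  finally show ?thesis .
qed

lemma (in prob_space) covariance_indep_var:
  fixes X Y :: "'a \<Rightarrow> real"
  assumes "indep_var borel X borel Y" "integrable M X" "integrable M Y"
  shows "covariance X Y = 0"
proof -
  have "indep_var borel ((\<lambda>a. a - expectation X) \<circ> X) borel ((\<lambda>a. a - expectation Y) \<circ> Y)"
    using assms(1) by (rule indep_var_compose) auto
  then have "covariance X Y = expectation (\<lambda>x. X x - expectation X) * expectation (\<lambda>x. Y x - expectation Y)"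
    unfolding covariance_def using assms(2,3) by (subst indep_var_lebesgue_integral) (auto simp: o_def)
  then show ?thesis using assms(2,3) by (simp add: prob_space)
qed

lemma (in prob_space) variance_le_second_moment:
  fixes X :: "'a \<Rightarrow> real"
  assumes "X \<in> borel_measurable M" "integrable M (\<lambda>x. (X x)\<^sup>2)"
  shows "variance X \<le> expectation (\<lambda>x. (X x)\<^sup>2)"
  using variance_eq[OF square_integrable_imp_integrable[OF assms] assms(2)] by simp

lemma (in prob_space) variance_weighted_sum:
  fixes \<theta> :: "'i \<Rightarrow> 'a \<Rightarrow> real"
  assumes "finite I"
    and meas: "\<And>i. i \<in> I \<Longrightarrow> \<theta> i \<in> borel_measurable M"
    and sq: "\<And>i. i \<in> I \<Longrightarrow> integrable M (\<lambda>x. (\<theta> i x)\<^sup>2)"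
  shows "variance (\<lambda>x. \<Sum>i\<in>I. w i * \<theta> i x)
    = (\<Sum>i\<in>I. \<Sum>j\<in>I. w i * w j * covariance (\<theta> i) (\<theta> j))"
proof -
  define D where "D i x = \<theta> i x - expectation (\<theta> i)" for i x
  have int: "integrable M (\<theta> i)" if "i \<in> I" for i
    using meas[OF that] sq[OF that] by (rule square_integrable_imp_integrable)
  have "(\<Sum>i\<in>I. w i * \<theta> i x) - expectation (\<lambda>x. \<Sum>i\<in>I. w i * \<theta> i x) = (\<Sum>i\<in>I. w i * D i x)" for x
    using int by (simp add: D_def right_diff_distrib sum_subtractf)
  then have "variance (\<lambda>x. \<Sum>i\<in>I. w i * \<theta> i x)
      = expectation (\<lambda>x. \<Sum>i\<in>I. \<Sum>j\<in>I. w i * w j * (D i x * D j x))"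
    by (simp add: power2_eq_square sum_product mult_ac)
  also have "\<dots> = (\<Sum>i\<in>I. \<Sum>j\<in>I. w i * w j * covariance (\<theta> i) (\<theta> j))"
    using meas sq square_integrable_centred
    by (simp add: covariance_def D_def integrable_mult_of_square_integrable)
  finally show ?thesis .
qed

lemma double_sum_le_sum_card_nbhd:
  fixes c :: "'i \<Rightarrow> 'i \<Rightarrow> real" and b :: "'i \<Rightarrow> real"
  assumes "finite I" and N: "\<And>i. i \<in> I \<Longrightarrow> N i \<subseteq> I"
    and sym: "\<And>i j. i \<in> I \<Longrightarrow> j \<in> I \<Longrightarrow> c i j = c j i"
    and zero: "\<And>i j. i \<in> I \<Longrightarrow> j \<in> I \<Longrightarrow> j \<notin> N i \<Longrightarrow> c i j = 0"
    and le: "\<And>i j. i \<in> I \<Longrightarrow> j \<in> I \<Longrightarrow> c i j \<le> (b i + b j) / 2"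
    and b: "\<And>i. i \<in> I \<Longrightarrow> 0 \<le> b i"
  shows "(\<Sum>i\<in>I. \<Sum>j\<in>I. c i j) \<le> (\<Sum>i\<in>I. card (N i) * b i)"
proof -
  \<comment> \<open>charge half of \<open>c i j\<close> to \<open>i\<close> and half to \<open>j\<close>; by symmetry of \<open>c\<close>,
     \<open>c i j \<noteq> 0\<close> forces both \<open>j \<in> N i\<close> and \<open>i \<in> N j\<close>\<close>
  define a where "a i j = (if j \<in> N i then b i else 0)" for i j
  have "c i j \<le> (a i j + a j i) / 2" if "i \<in> I" "j \<in> I" for i j
    using zero[OF that] zero[OF that(2,1)] sym[OF that] le[OF that] b that
    by (auto simp: a_def)
  then have "(\<Sum>i\<in>I. \<Sum>j\<in>I. c i j) \<le> (\<Sum>i\<in>I. \<Sum>j\<in>I. (a i j + a j i) / 2)"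
    by (intro sum_mono)
  also have "\<dots> = (\<Sum>i\<in>I. \<Sum>j\<in>I. a i j)"
    by (simp add: sum.distrib sum_divide_distrib[symmetric] add_divide_distrib sum.swap[of "\<lambda>i j. a j i"])
  also have "\<dots> = (\<Sum>i\<in>I. card (N i) * b i)"
    using N \<open>finite I\<close> by (intro sum.cong) (auto simp: a_def sum.If_cases Int_absorb1 Int_commute)
  finally show ?thesis .
qed

lemma (in prob_space) variance_sum_le_dep_nbhd:
  fixes \<theta> :: "'i \<Rightarrow> 'a \<Rightarrow> real"
  assumes "finite I"
    and meas: "\<And>i. i \<in> I \<Longrightarrow> \<theta> i \<in> borel_measurable M"
    and sq: "\<And>i. i \<in> I \<Longrightarrow> integrable M (\<lambda>x. (\<theta> i x)\<^sup>2)"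
    and indep: "\<And>i j. i \<in> I \<Longrightarrow> j \<in> I \<Longrightarrow> j \<notin> N i \<Longrightarrow>
      indep_var borel (\<theta> i) borel (\<theta> j)"
    and N: "\<And>i. i \<in> I \<Longrightarrow> N i \<subseteq> I"
    and w: "\<And>i. i \<in> I \<Longrightarrow> 0 \<le> w i \<and> w i \<le> W"
  shows "variance (\<lambda>x. \<Sum>i\<in>I. w i * \<theta> i x)
    \<le> W\<^sup>2 * (\<Sum>i\<in>I. card (N i) * expectation (\<lambda>x. (\<theta> i x)\<^sup>2))"
proof -
  define m where "m i = expectation (\<lambda>x. (\<theta> i x)\<^sup>2)" for i
  have int: "integrable M (\<theta> i)" if "i \<in> I" for i
    using meas[OF that] sq[OF that] by (rule square_integrable_imp_integrable)
  have cov_le: "w i * w j * covariance (\<theta> i) (\<theta> j) \<le> (W\<^sup>2 * m i + W\<^sup>2 * m j) / 2"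
    if "i \<in> I" "j \<in> I" for i j
  proof -
    have "w i * w j * covariance (\<theta> i) (\<theta> j) \<le> w i * w j * \<bar>covariance (\<theta> i) (\<theta> j)\<bar>"
      using w[OF that(1)] w[OF that(2)] by (intro mult_left_mono) auto
    also have "\<dots> \<le> W\<^sup>2 * \<bar>covariance (\<theta> i) (\<theta> j)\<bar>"
      using w[OF that(1)] w[OF that(2)] unfolding power2_eq_square
      by (intro mult_right_mono mult_mono) auto
    also have "\<dots> \<le> W\<^sup>2 * ((m i + m j) / 2)"
    proof (rule mult_left_mono)
      show "\<bar>covariance (\<theta> i) (\<theta> j)\<bar> \<le> (m i + m j) / 2"
        using abs_covariance_le[OF meas[OF that(1)] meas[OF that(2)] sq[OF that(1)] sq[OF that(2)]]
          variance_le_second_moment[OF meas sq, OF that(1) that(1)]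
          variance_le_second_moment[OF meas sq, OF that(2) that(2)]
        unfolding m_def by argo
    qed simp
    finally show ?thesis by (simp add: algebra_simps)
  qed
  have "variance (\<lambda>x. \<Sum>i\<in>I. w i * \<theta> i x) = (\<Sum>i\<in>I. \<Sum>j\<in>I. w i * w j * covariance (\<theta> i) (\<theta> j))"
    using \<open>finite I\<close> meas sq by (rule variance_weighted_sum)
  also have "\<dots> \<le> (\<Sum>i\<in>I. card (N i) * (W\<^sup>2 * m i))"
    using \<open>finite I\<close> N
  proof (rule double_sum_le_sum_card_nbhd)
    show "w i * w j * covariance (\<theta> i) (\<theta> j) = 0" if "i \<in> I" "j \<in> I" "j \<notin> N i" for i j
      using covariance_indep_var[OF indep[OF that] int int] that by simp
  qed (use cov_le in \<open>auto simp: m_def covariance_commute\<close>)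
  also have "\<dots> = W\<^sup>2 * (\<Sum>i\<in>I. card (N i) * m i)"
    by (simp add: sum_distrib_left mult_ac)
  finally show ?thesis by (simp add: m_def)
qed

lemma (in prob_space) variance_sum_le_dep_nbhd_nn_integral:
  fixes \<theta> :: "'i \<Rightarrow> 'a \<Rightarrow> real"
  assumes "finite I"
    and int: "\<And>i. i \<in> I \<Longrightarrow> integrable M (\<theta> i)"
    and indep: "\<And>i j. i \<in> I \<Longrightarrow> j \<in> I \<Longrightarrow> j \<notin> N i \<Longrightarrow>
      indep_var borel (\<theta> i) borel (\<theta> j)"
    and N: "\<And>i. i \<in> I \<Longrightarrow> N i \<subseteq> I"
    and w: "\<And>i. i \<in> I \<Longrightarrow> 0 \<le> w i \<and> w i \<le> W"
  shows "ennreal (variance (\<lambda>x. \<Sum>i\<in>I. w i * \<theta> i x))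
    \<le> ennreal (W\<^sup>2) * (\<Sum>i\<in>I. of_nat (card (N i)) * (\<integral>\<^sup>+x. ennreal ((\<theta> i x)\<^sup>2) \<partial>M))"
proof (cases "\<forall>i\<in>I. integrable M (\<lambda>x. (\<theta> i x)\<^sup>2)")
  case True
  have "ennreal (variance (\<lambda>x. \<Sum>i\<in>I. w i * \<theta> i x))
      \<le> ennreal (W\<^sup>2 * (\<Sum>i\<in>I. card (N i) * expectation (\<lambda>x. (\<theta> i x)\<^sup>2)))"
    using assms True by (intro ennreal_leI variance_sum_le_dep_nbhd) auto
  also have "\<dots> = ennreal (W\<^sup>2) *
      (\<Sum>i\<in>I. of_nat (card (N i)) * (\<integral>\<^sup>+x. ennreal ((\<theta> i x)\<^sup>2) \<partial>M))"
    using True by (simp add: ennreal_mult sum_nonneg nn_integral_eq_integral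
        ennreal_of_nat_eq_real_of_nat flip: sum_ennreal)
  finally show ?thesis .
next
  case False
  then obtain k where k: "k \<in> I" "\<not> integrable M (\<lambda>x. (\<theta> k x)\<^sup>2)" by blast
  have "(\<integral>\<^sup>+x. ennreal ((\<theta> k x)\<^sup>2) \<partial>M) = \<top>"
    using k int[OF k(1)] by (auto simp: integrable_iff_bounded less_top[symmetric])
  \<comment> \<open>otherwise \<open>\<theta>\<^sub>k\<close> would be independent of itself, hence square integrable\<close>
  moreover have "k \<in> N k"
  proof (rule ccontr)
    assume "k \<notin> N k"
    with k int indep have "integrable M (\<lambda>x. \<theta> k x * \<theta> k x)"
      by (intro indep_var_integrable) auto
    with k show False by (simp add: power2_eq_square)
  qed
  ultimately have sum_top:
    "(\<Sum>i\<in>I. of_nat (card (N i)) * (\<integral>\<^sup>+x. ennreal ((\<theta> i x)\<^sup>2) \<partial>M)) = \<top>"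
    using k N \<open>finite I\<close>
    by (auto simp: ennreal_mult_eq_top_iff card_gt_0_iff intro!: bexI[of _ k] finite_subset[of "N k" I])
  show ?thesis
  proof (cases "W = 0")
    case True
    with w have "(\<Sum>i\<in>I. w i * \<theta> i x) = 0" for x
      by (intro sum.neutral) (auto intro: antisym)
    then show ?thesis by simp
  qed (simp add: sum_top ennreal_mult_top)
qed

section \<open>Hoelder's inequality for the product \<open>y \<psi>\<close>\<close>

lemma nn_integral_mult_le_Holder:
  fixes f g :: "'a \<Rightarrow> real"
  assumes [measurable]: "f \<in> borel_measurable M" "g \<in> borel_measurable M"
    and f0: "\<And>x. 0 \<le> f x" and g0: "\<And>x. 0 \<le> g x"
    and ab: "a > 1" "b > 1" "1/a + 1/b = 1"
    and fi: "integrable M (\<lambda>x. f x powr a)" and gi: "integrable M (\<lambda>x. g x powr b)"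
  shows "(\<integral>\<^sup>+x. ennreal (f x * g x) \<partial>M)
    \<le> ennreal ((\<integral>x. f x powr a \<partial>M) powr (1/a) * (\<integral>x. g x powr b \<partial>M) powr (1/b))"
proof -
  define A where "A = (\<integral>x. f x powr a \<partial>M)"
  define B where "B = (\<integral>x. g x powr b \<partial>M)"
  have "0 \<le> A" "0 \<le> B" unfolding A_def B_def by (auto intro: integral_nonneg_AE)
  show ?thesis
  proof (cases "A = 0 \<or> B = 0")
    case True
    then have "AE x in M. f x powr a = 0 \<or> g x powr b = 0"
      using integral_nonneg_eq_0_iff_AE[OF fi] integral_nonneg_eq_0_iff_AE[OF gi]
      by (auto simp: A_def B_def)
    then have "AE x in M. f x * g x = 0" by eventually_elim simp
    then have "(\<integral>\<^sup>+x. ennreal (f x * g x) \<partial>M) = (\<integral>\<^sup>+x. 0 \<partial>M)"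
      by (intro nn_integral_cong_AE) auto
    then show ?thesis by simp
  next
    case False
    with \<open>0 \<le> A\<close> \<open>0 \<le> B\<close> have "A > 0" "B > 0" by auto
    define \<alpha> \<beta> where "\<alpha> = A powr (1/a)" and "\<beta> = B powr (1/b)"
    have "\<alpha> > 0" "\<beta> > 0" "\<alpha> powr a = A" "\<beta> powr b = B"
      using \<open>A > 0\<close> \<open>B > 0\<close> ab by (auto simp: \<alpha>_def \<beta>_def powr_powr)
    define h where "h x = \<alpha> * \<beta> * (f x powr a / (A * a) + g x powr b / (B * b))" for x
    \<comment> \<open>Young's inequality applied to the normalised functions \<open>f / \<alpha>\<close> and \<open>g / \<beta>\<close>\<close>
    have "f x * g x \<le> h x" for x
    proof -
      have "(f x / \<alpha>) * (g x / \<beta>) \<le> (f x / \<alpha>) powr a / a + (g x / \<beta>) powr b / b"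
        using f0 g0 \<open>\<alpha> > 0\<close> \<open>\<beta> > 0\<close> by (intro Youngs_inequality[OF ab]) auto
      with \<open>\<alpha> > 0\<close> \<open>\<beta> > 0\<close> \<open>\<alpha> powr a = A\<close> \<open>\<beta> powr b = B\<close> f0 g0 show ?thesis
        by (simp add: h_def powr_divide field_simps)
    qed
    then have "(\<integral>\<^sup>+x. ennreal (f x * g x) \<partial>M) \<le> (\<integral>\<^sup>+x. ennreal (h x) \<partial>M)"
      by (intro nn_integral_mono ennreal_leI)
    also have "\<dots> = ennreal (\<integral>x. h x \<partial>M)"
      using fi gi f0 g0 ab \<open>\<alpha> > 0\<close> \<open>\<beta> > 0\<close> \<open>A > 0\<close> \<open>B > 0\<close>
      by (intro nn_integral_eq_integral) (auto simp: h_def)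
    also have "(\<integral>x. h x \<partial>M) = \<alpha> * \<beta> * (1/a + 1/b)"
      using fi gi \<open>A > 0\<close> \<open>B > 0\<close> by (simp add: h_def A_def[symmetric] B_def[symmetric])
    also have "\<dots> = \<alpha> * \<beta>"
      using ab by simp
    finally show ?thesis by (simp add: \<alpha>_def \<beta>_def A_def B_def)
  qed
qed

lemma Lp_norm_2_square: "(Lp_norm M 2 u)\<^sup>2 = (\<integral>\<^sup>+x. ennreal ((u x)\<^sup>2) \<partial>M)"
proof -
  have two: "enn2real 2 = 2" "(2::ennreal) \<noteq> \<infinity>"
    using enn2real_ennreal[of 2] by simp_all
  show ?thesis
  proof (cases "(\<integral>\<^sup>+x. ennreal ((u x)\<^sup>2) \<partial>M)")
    case (real r)
    then show ?thesis
      by (simp add: Lp_norm_def two ennreal_power powr_half_sqrt)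
  qed (simp add: Lp_norm_def two top_power_ennreal)
qed

lemma AE_le_Lp_norm_top: "AE x in M. ennreal \<bar>u x\<bar> \<le> Lp_norm M \<infinity> u"
  unfolding Lp_norm_def by (simp add: esssup_AE)

lemma Lp_norm_eq_integral:
  assumes "0 < p" "integrable M (\<lambda>x. \<bar>u x\<bar> powr p)"
  shows "Lp_norm M (ennreal p) u = ennreal ((\<integral>x. \<bar>u x\<bar> powr p \<partial>M) powr (1/p))"
  using assms by (simp add: Lp_norm_def nn_integral_eq_integral)

lemma Lp_norm_eq_top:
  assumes "0 < p" "u \<in> borel_measurable M" "\<not> integrable M (\<lambda>x. \<bar>u x\<bar> powr p)"
  shows "Lp_norm M (ennreal p) u = \<top>"
  using assms by (auto simp: Lp_norm_def integrable_iff_bounded less_top[symmetric])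

lemma AE_eq_0_if_Lp_norm_eq_0:
  assumes [measurable]: "u \<in> borel_measurable M" and "1 \<le> p" and "Lp_norm M p u = 0"
  shows "AE x in M. u x = 0"
proof (cases p)
  case (real r)
  with assms have "r > 0" "integrable M (\<lambda>x. \<bar>u x\<bar> powr r)"
    using Lp_norm_eq_top[of r u M] by (auto simp: ennreal_le_iff2 less_le)
  with assms \<open>p = ennreal r\<close> have "(\<integral>x. \<bar>u x\<bar> powr r \<partial>M) = 0"
    by (simp add: Lp_norm_eq_integral)
  with \<open>integrable M (\<lambda>x. \<bar>u x\<bar> powr r)\<close> have "AE x in M. \<bar>u x\<bar> powr r = 0"
    by (simp add: integral_nonneg_eq_0_iff_AE)
  then show ?thesis by eventually_elim simp
next
  case top
  with AE_le_Lp_norm_top[where M=M and u=u] assms(3) show ?thesis by simp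
qed

lemma conjugate_half_exponents_cases:
  fixes p q :: ennreal
  assumes "1 \<le> p" "1 \<le> q" "1/p + 1/q = 1/2"
  obtains "p = \<infinity>" "q = 2" | "p = 2" "q = \<infinity>"
    | p' q' where "p = ennreal p'" "q = ennreal q'" "2 < p'" "2 < q'" "1/p' + 1/q' = 1/2"
proof (cases "p = \<top> \<or> q = \<top>")
  case True
  have two: "r = 2" if "1/r = 1/(2::ennreal)" for r
    using arg_cong[OF that, of "\<lambda>x. 1/x"] by (simp only: one_divide_one_divide_ennreal)
  from True assms(3) consider "p = \<top>" "1/q = 1/2" | "q = \<top>" "1/p = 1/2"
    by (auto simp: divide_ennreal_def)
  then show thesis using that(1,2) two by cases auto
next
  case False
  then obtain p' q' where pq: "p = ennreal p'" "q = ennreal q'" "0 \<le> p'" "0 \<le> q'"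
    by (cases p; cases q) auto
  with assms have "1 \<le> p'" "1 \<le> q'" by (auto simp: ennreal_le_iff2)
  have inverse: "1 / ennreal r = ennreal (1 / r)" if "0 < r" for r
    using divide_ennreal[of 1 r] that by simp
  from assms(3) pq \<open>1 \<le> p'\<close> \<open>1 \<le> q'\<close> have "ennreal (1/p' + 1/q') = ennreal (1/2)"
    using inverse[of 2] by (simp del: ennreal_plus add: ennreal_plus[symmetric] inverse)
  with \<open>1 \<le> p'\<close> \<open>1 \<le> q'\<close> have "1/p' + 1/q' = 1/2"
    by (subst (asm) ennreal_inj) auto
  moreover have "0 < 1/p'" "0 < 1/q'"
    using \<open>1 \<le> p'\<close> \<open>1 \<le> q'\<close> by simp_all
  with \<open>1/p' + 1/q' = 1/2\<close> have "1/p' < 1/2" "1/q' < 1/2"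
    by linarith+
  then have "2 < p'" "2 < q'"
    using \<open>1 \<le> p'\<close> \<open>1 \<le> q'\<close> by (simp_all add: field_simps)
  ultimately show thesis using pq that(3) by blast
qed

lemma nn_integral_square_mult_le_Lp_norm_top_2:
  assumes "\<psi> \<in> borel_measurable M"
  shows "(\<integral>\<^sup>+x. ennreal ((y x * \<psi> x)\<^sup>2) \<partial>M)
    \<le> (Lp_norm M \<infinity> y)\<^sup>2 * (Lp_norm M 2 \<psi>)\<^sup>2"
proof -
  have "(\<integral>\<^sup>+x. ennreal ((y x * \<psi> x)\<^sup>2) \<partial>M)
      = (\<integral>\<^sup>+x. (ennreal \<bar>y x\<bar>)\<^sup>2 * ennreal ((\<psi> x)\<^sup>2) \<partial>M)"
    by (simp add: ennreal_power ennreal_mult[symmetric] power_mult_distrib)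
  also have "\<dots> \<le> (\<integral>\<^sup>+x. (Lp_norm M \<infinity> y)\<^sup>2 * ennreal ((\<psi> x)\<^sup>2) \<partial>M)"
    using AE_le_Lp_norm_top[where M=M and u=y]
    by (intro nn_integral_mono_AE) (auto elim!: eventually_mono intro!: mult_right_mono power_mono)
  also have "\<dots> = (Lp_norm M \<infinity> y)\<^sup>2 * (\<integral>\<^sup>+x. ennreal ((\<psi> x)\<^sup>2) \<partial>M)"
    using assms by (intro nn_integral_cmult) measurable
  finally show ?thesis by (simp add: Lp_norm_2_square)
qed

lemma nn_integral_square_mult_le_Lp_norm_finite:
  assumes [measurable]: "y \<in> borel_measurable M" "\<psi> \<in> borel_measurable M"
    and pq: "2 < p" "2 < q" "1/p + 1/q = 1/2"
    and nonzero: "Lp_norm M (ennreal p) y \<noteq> 0" "Lp_norm M (ennreal q) \<psi> \<noteq> 0"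
  shows "(\<integral>\<^sup>+x. ennreal ((y x * \<psi> x)\<^sup>2) \<partial>M)
    \<le> (Lp_norm M (ennreal p) y)\<^sup>2 * (Lp_norm M (ennreal q) \<psi>)\<^sup>2"
proof (cases "integrable M (\<lambda>x. \<bar>y x\<bar> powr p) \<and> integrable M (\<lambda>x. \<bar>\<psi> x\<bar> powr q)")
  case True
  have sq_powr: "(z\<^sup>2) powr (r/2) = \<bar>z\<bar> powr r" for z r :: real
  proof -
    have "(z\<^sup>2) powr (r/2) = (\<bar>z\<bar> powr 2) powr (r/2)" by simp
    then show ?thesis by (simp only: powr_powr) simp
  qed
  have powr_sq: "(z powr r)\<^sup>2 = z powr (2 * r)" for z r :: real
    by (simp add: power2_eq_square flip: powr_add)
  have "p/2 > 1" "q/2 > 1" "1/(p/2) + 1/(q/2) = 1"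
    using pq by (auto simp: field_simps)
  then have "(\<integral>\<^sup>+x. ennreal ((y x)\<^sup>2 * (\<psi> x)\<^sup>2) \<partial>M)
      \<le> ennreal ((\<integral>x. ((y x)\<^sup>2) powr (p/2) \<partial>M) powr (1/(p/2)) *
                  (\<integral>x. ((\<psi> x)\<^sup>2) powr (q/2) \<partial>M) powr (1/(q/2)))"
    using True by (intro nn_integral_mult_le_Holder) (auto simp: sq_powr)
  also have "\<dots> = (Lp_norm M (ennreal p) y)\<^sup>2 * (Lp_norm M (ennreal q) \<psi>)\<^sup>2"
    using True pq
    by (simp add: sq_powr Lp_norm_eq_integral ennreal_power ennreal_mult integral_nonneg_AE powr_sq)
  finally show ?thesis by (simp add: power_mult_distrib)
next
  case False
  with pq have "Lp_norm M (ennreal p) y = \<top> \<or> Lp_norm M (ennreal q) \<psi> = \<top>"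
    using Lp_norm_eq_top[of p y M] Lp_norm_eq_top[of q \<psi> M] by auto
  with nonzero show ?thesis by (auto simp: top_power_ennreal ennreal_mult_top)
qed

lemma nn_integral_square_mult_le_Lp_norm:
  assumes [measurable]: "y \<in> borel_measurable M" "\<psi> \<in> borel_measurable M"
    and "1 \<le> p" "1 \<le> q" "1/p + 1/q = 1/(2::ennreal)"
  shows "(\<integral>\<^sup>+x. ennreal ((y x * \<psi> x)\<^sup>2) \<partial>M)
    \<le> (Lp_norm M p y)\<^sup>2 * (Lp_norm M q \<psi>)\<^sup>2"
proof (cases "Lp_norm M p y = 0 \<or> Lp_norm M q \<psi> = 0")
  \<comment> \<open>handled first because \<open>0 * \<infinity> = 0\<close> in \<open>ennreal\<close>\<close>
  case True
  with assms have "AE x in M. y x = 0 \<or> \<psi> x = 0"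
    using AE_eq_0_if_Lp_norm_eq_0[of y M p] AE_eq_0_if_Lp_norm_eq_0[of \<psi> M q]
    by (auto elim: eventually_mono)
  then have "(\<integral>\<^sup>+x. ennreal ((y x * \<psi> x)\<^sup>2) \<partial>M) = (\<integral>\<^sup>+x. 0 \<partial>M)"
    by (intro nn_integral_cong_AE) auto
  then show ?thesis by simp
next
  case False
  from assms(3-5) show ?thesis
  proof (cases rule: conjugate_half_exponents_cases)
    case 1
    then show ?thesis using nn_integral_square_mult_le_Lp_norm_top_2[OF assms(2)] by simp
  next
    case 2
    then show ?thesis using nn_integral_square_mult_le_Lp_norm_top_2[OF assms(1), of \<psi>]
      by (simp add: mult.commute)
  next
    case (3 p' q')
    with False show ?thesis using nn_integral_square_mult_le_Lp_norm_finite[of y M \<psi> p' q'] by simp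
  qed
qed

lemma (in prob_space) variance_sum_mult_le_Lp_norms:
  assumes L2: "\<And>i. i \<in> {1..n} \<Longrightarrow> y i \<in> L2_funs M" "\<And>i. i \<in> {1..n} \<Longrightarrow> \<psi> i \<in> L2_funs M"
    and w: "\<And>i. i \<in> {1..n} \<Longrightarrow> 0 \<le> w i \<and> w i \<le> W"
    and pq: "1 \<le> p" "1 \<le> q" "1/p + 1/q = 1/(2::ennreal)"
  shows "ennreal (variance (\<lambda>x. \<Sum>i\<in>{1..n}. w i * (y i x * \<psi> i x)))
    \<le> ennreal (W\<^sup>2) * (\<Sum>i\<in>{1..n}. of_nat (card (dep_nbhd M y \<psi> n i)) *
        (Lp_norm M p (y i))\<^sup>2 * (Lp_norm M q (\<psi> i))\<^sup>2)"
proof -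
  have [measurable]: "y i \<in> borel_measurable M" "\<psi> i \<in> borel_measurable M" if "i \<in> {1..n}" for i
    using L2 that by (auto simp: L2_funs_def)
  have "ennreal (variance (\<lambda>x. \<Sum>i\<in>{1..n}. w i * (y i x * \<psi> i x)))
      \<le> ennreal (W\<^sup>2) * (\<Sum>i\<in>{1..n}. of_nat (card (dep_nbhd M y \<psi> n i)) *
          (\<integral>\<^sup>+x. ennreal ((y i x * \<psi> i x)\<^sup>2) \<partial>M))"
  proof (rule variance_sum_le_dep_nbhd_nn_integral)
    fix i assume "i \<in> {1..n}"
    with L2 show "integrable M (\<lambda>x. y i x * \<psi> i x)"
      by (intro integrable_mult_of_square_integrable) (auto simp: L2_funs_def)
    from \<open>i \<in> {1..n}\<close> show "dep_nbhd M y \<psi> n i \<subseteq> {1..n}"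
      by (intro dep_nbhd_subset) auto
  next
    fix i j assume "i \<in> {1..n}" "j \<in> {1..n}" "j \<notin> dep_nbhd M y \<psi> n i"
    then show "indep_var borel (\<lambda>x. y i x * \<psi> i x) borel (\<lambda>x. y j x * \<psi> j x)"
      by (intro indep_var_mult_if_notin_dep_nbhd) auto
  qed (use w in auto)
  also have "\<dots> \<le> ennreal (W\<^sup>2) * (\<Sum>i\<in>{1..n}. of_nat (card (dep_nbhd M y \<psi> n i)) *
      (Lp_norm M p (y i))\<^sup>2 * (Lp_norm M q (\<psi> i))\<^sup>2)"
    using pq unfolding mult.assoc
    by (intro mult_left_mono sum_mono nn_integral_square_mult_le_Lp_norm) auto
  finally show ?thesis .
qed

section \<open>Optimising over the exponents\<close>

lemma le_cmult_power2_INF: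
  fixes f :: "'s \<Rightarrow> ennreal" and c V :: ennreal
  assumes "S \<noteq> {}" "c < \<top>" and le: "\<And>s. s \<in> S \<Longrightarrow> V \<le> c * (f s)\<^sup>2"
  shows "V \<le> c * (INF s\<in>S. f s)\<^sup>2"
proof -
  have "continuous_on UNIV (\<lambda>x::ennreal. x * x)"
    unfolding continuous_on_def by (auto intro!: tendsto_mult_ennreal)
  then have "continuous_on UNIV (\<lambda>x::ennreal. c * x\<^sup>2)"
    using \<open>c < \<top>\<close> by (simp add: ennreal_continuous_on_cmult power2_eq_square)
  moreover have "mono (\<lambda>x::ennreal. c * x\<^sup>2)"
    by (auto simp: mono_def intro!: mult_left_mono power_mono)
  ultimately have "c * (Inf (f ` S))\<^sup>2 = Inf ((\<lambda>x. c * x\<^sup>2) ` f ` S)"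
    using \<open>S \<noteq> {}\<close>
    by (intro continuous_at_Inf_mono) (auto intro: continuous_on_imp_continuous_within)
  moreover have "V \<le> Inf ((\<lambda>x. c * x\<^sup>2) ` f ` S)"
    using le by (auto intro: Inf_greatest)
  ultimately show ?thesis by simp
qed

lemma sum_le_INF_Max_square:
  fixes a b :: "'s \<Rightarrow> 'i \<Rightarrow> ennreal" and m :: "'i \<Rightarrow> nat"
  assumes "finite I" "S \<noteq> {}" "0 \<le> c"
    and le: "\<And>s. s \<in> S \<Longrightarrow> V \<le> ennreal c * (\<Sum>i\<in>I. of_nat (m i) * (a s i)\<^sup>2 * (b s i)\<^sup>2)"
  shows "V \<le> ennreal (c * (\<Sum>i\<in>I. real (m i))) * (INF s\<in>S. (MAX i\<in>I. a s i) * (MAX i\<in>I. b s i))\<^sup>2"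
proof (rule le_cmult_power2_INF)
  fix s assume "s \<in> S"
  have "(\<Sum>i\<in>I. of_nat (m i) * (a s i)\<^sup>2 * (b s i)\<^sup>2)
      \<le> (\<Sum>i\<in>I. of_nat (m i) * ((MAX i\<in>I. a s i) * (MAX i\<in>I. b s i))\<^sup>2)"
    using \<open>finite I\<close> unfolding mult.assoc power_mult_distrib
    by (intro sum_mono mult_left_mono mult_mono power_mono Max_ge) auto
  also have "\<dots> = ennreal (\<Sum>i\<in>I. real (m i)) * ((MAX i\<in>I. a s i) * (MAX i\<in>I. b s i))\<^sup>2"
    by (simp add: sum_distrib_right ennreal_of_nat_eq_real_of_nat flip: sum_ennreal)
  finally show "V \<le> ennreal (c * (\<Sum>i\<in>I. real (m i))) * ((MAX i\<in>I. a s i) * (MAX i\<in>I. b s i))\<^sup>2"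
    using le[OF \<open>s \<in> S\<close>] \<open>0 \<le> c\<close>
    by (simp add: ennreal_mult sum_nonneg mult.assoc) (meson mult_left_mono order_trans zero_le)
qed (use assms in auto)

theorem proposition4:
  fixes MZ :: "'z measure" and MW :: "'w measure"
    and y :: "nat \<Rightarrow> 'z \<times> 'w \<Rightarrow> real" and \<psi> :: "nat \<Rightarrow> 'z \<times> 'w \<Rightarrow> real"
    and Msp :: "nat \<Rightarrow> ('z \<times> 'w \<Rightarrow> real) set" and \<theta> :: "nat \<Rightarrow> ('z \<times> 'w \<Rightarrow> real) \<Rightarrow> real"
    and \<nu> :: "nat \<Rightarrow> nat \<Rightarrow> real" and \<nu>bar :: real and n :: nat
  assumes "prob_space MZ" and "prob_space MW"
    and "\<And>i. i \<ge> 1 \<Longrightarrow> closed_L2_subspace (MZ \<Otimes>\<^sub>M MW) (Msp i)"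
    and "\<And>i. i \<ge> 1 \<Longrightarrow> y i \<in> Msp i"
    and "\<And>i. i \<ge> 1 \<Longrightarrow> \<psi> i \<in> Msp i"
    and "\<And>i u. i \<ge> 1 \<Longrightarrow> u \<in> Msp i \<Longrightarrow>
           \<theta> i u = (\<integral>x. u x * \<psi> i x \<partial>(MZ \<Otimes>\<^sub>M MW))"
    and "\<nu>bar > 0"
    and "\<And>m i. 1 \<le> i \<Longrightarrow> i \<le> m \<Longrightarrow> 0 \<le> \<nu> m i \<and> real m * \<nu> m i \<le> \<nu>bar"
  shows
    "(\<forall>p q. 1 \<le> p \<and> 1 \<le> q \<and> 1 / p + 1 / q = 1 / (2::ennreal) \<longrightarrow>
        ennreal (prob_space.variance (MZ \<Otimes>\<^sub>M MW)
                   (\<lambda>x. \<Sum>i\<in>{1..n}. \<nu> n i * (y i x * \<psi> i x)))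
        \<le> ennreal (\<nu>bar\<^sup>2 / (real n)\<^sup>2) *
          (\<Sum>i\<in>{1..n}. of_nat (card (dep_nbhd (MZ \<Otimes>\<^sub>M MW) y \<psi> n i)) *
              (Lp_norm (MZ \<Otimes>\<^sub>M MW) p (y i))\<^sup>2 * (Lp_norm (MZ \<Otimes>\<^sub>M MW) q (\<psi> i))\<^sup>2))
     \<and>
     ennreal (prob_space.variance (MZ \<Otimes>\<^sub>M MW)
                (\<lambda>x. \<Sum>i\<in>{1..n}. \<nu> n i * (y i x * \<psi> i x)))
     \<le> ennreal (\<nu>bar\<^sup>2 *
           ((\<Sum>i\<in>{1..n}. real (card (dep_nbhd (MZ \<Otimes>\<^sub>M MW) y \<psi> n i))) / real n) / real n) *
       (INF pq\<in>{(p, q). 1 \<le> p \<and> 1 \<le> q \<and> 1 / p + 1 / q = 1 / (2::ennreal)}.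
           (MAX i\<in>{1..n}. Lp_norm (MZ \<Otimes>\<^sub>M MW) (fst pq) (y i)) *
           (MAX i\<in>{1..n}. Lp_norm (MZ \<Otimes>\<^sub>M MW) (snd pq) (\<psi> i)))\<^sup>2"
proof -
  let ?M = "MZ \<Otimes>\<^sub>M MW"
  interpret prob_space ?M
    using assms(1,2) by (rule prob_space_pair)
  have L2: "y i \<in> L2_funs ?M" "\<psi> i \<in> L2_funs ?M" if "i \<in> {1..n}" for i
    using assms(3-5)[of i] that unfolding closed_L2_subspace_def by auto
  have weights: "0 \<le> \<nu> n i \<and> \<nu> n i \<le> \<nu>bar / n" if "i \<in> {1..n}" for i
    using assms(8)[of i n] that by (auto simp: field_simps)
  note bound = variance_sum_mult_le_Lp_norms[OF L2(1) L2(2) weights]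
  define S\<^sub>2 where "S\<^sub>2 = {(p, q). 1 \<le> p \<and> 1 \<le> q \<and> 1 / p + 1 / q = 1 / (2::ennreal)}"
  have "(2, \<top>) \<in> S\<^sub>2" by (simp add: S\<^sub>2_def one_le_numeral)
  then have "S\<^sub>2 \<noteq> {}" by blast
  then have "ennreal (variance (\<lambda>x. \<Sum>i\<in>{1..n}. \<nu> n i * (y i x * \<psi> i x)))
      \<le> ennreal ((\<nu>bar / n)\<^sup>2 * (\<Sum>i\<in>{1..n}. real (card (dep_nbhd ?M y \<psi> n i)))) *
        (INF pq\<in>S\<^sub>2. (MAX i\<in>{1..n}. Lp_norm ?M (fst pq) (y i)) *
          (MAX i\<in>{1..n}. Lp_norm ?M (snd pq) (\<psi> i)))\<^sup>2"
    by (rule sum_le_INF_Max_square[rotated]) (use bound in \<open>auto simp: S\<^sub>2_def\<close>)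
  moreover have "(\<nu>bar / n)\<^sup>2 * (\<Sum>i\<in>{1..n}. real (card (dep_nbhd ?M y \<psi> n i)))
      = \<nu>bar\<^sup>2 * ((\<Sum>i\<in>{1..n}. real (card (dep_nbhd ?M y \<psi> n i))) / n) / n"
    by (simp add: power2_eq_square)
  ultimately show ?thesis
    using bound unfolding S\<^sub>2_def power_divide by auto
qed

end
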